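(* Let $Q=\langle F,V,I,O,G\rangle$ be a QNP and let $\pi$ be a policy for $Q$. Then $\pi$ is a strong cyclic solution for $Q$ if and only if $\pi$ (viewed as a policy on the boolean states) is a strong cyclic policy for the FOND problem $T_D(Q)$.
   Context: A qualitative numerical problem (QNP) is a tuple $Q=\langle F,V,I,O,G\rangle$ where $F$ is a finite set of propositional variables and $V$ a finite set of numerical variables taking non-negative real values. $F$-literals are $p,\neg p$ ($p\in F$); $V$-literals are $X=0$ and $X>0$ ($X\in V$). $I$ and $G$ are consistent sets of $F$- and $V$-literals. Each action $a\in O$ has a precondition $Pre(a)$ (set of $F$- and $V$-literals), propositional effects $\mathit{Eff}(a)$ (consistent set of $F$-literals) and numerical effects $N(a)$ (a set of atoms $Inc(X)$, $Dec(X)$, at most one per variable); if $Dec(X)\in N(a)$ then $X>0\in Pre(a)$. A state $s$ assigns a truth value $s[p]$ to each $p\in F$ and a real $s[X]\ge 0$ to each $X\in V$. Initial states are the states satisfying $I$ under a closed-world assumption ($p$, resp. $X=0$, is false if not in $I$). $a$ is applicable in $s$ if $s$ satisfies $Pre(a)$; goal states satisfy $G$. For applicable $a$, $s'\in F(a,s)$ iff $s'[p]$ is true (false) if $p$ ($\neg p$) is in $\mathit{Eff}(a)$ and $s'[p]=s[p]$ otherwise, $s'[X]>s[X]$ if $Inc(X)\in N(a)$, $s'[X]<s[X]$ if $Dec(X)\in N(a)$, and $s'[X]=s[X]$ otherwise. For $\epsilon>0$, a sequence $s_0,a_0,s_1,\dots$ with $a_i$ applicable in $s_i$ and $s_{i+1}\in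 F(a_i,s_i)$ is an $\epsilon$-sequence if for all $X,i$: $s_{i+1}[X]\neq s_i[X]$ implies $|s_{i+1}[X]-s_i[X]|\ge\epsilon$ or $0=s_{i+1}[X]<s_i[X]<\epsilon$; trajectories of $Q$ are such $\epsilon$-sequences for some $\epsilon>0$. The boolean state $\bar s$ of $s$ is the truth valuation it induces on the atoms $p\in F$ and $X=0$ ($X\in V$). A policy for $Q$ is a partial map $\pi$ from states to actions with $\pi(s)=\pi(s')$ whenever $\bar s=\bar s'$; a $\pi$-trajectory is one with $a_i=\pi(s_i)$. $\pi$ is a strong cyclic solution for $Q$ iff for every $\pi$-trajectory from an initial state $s_0$ to a state $s$ there is a $\pi$-trajectory from $s$ to a goal state. A FOND problem $P=\langle F,I,O,G\rangle$ has propositional variables $F$, a unique initial state given by $I$, goal literals $G$, and actions with preconditions and effects, some nondeterministic of the form $E_1\mid\cdots\mid E_k$ (sets of literals); $F(a,t)$ is the set of successors of $t$ under $a$ obtained by choosing one outcome per nondeterministic effect. A policy is a partial map from states to actions; a $\pi$-trajectory is a sequence $t_0,t_1,\dots$ with $\pi(t_i)$ defined and applicable in $t_i$ and $t_{i+1}\in F(\pi(t_i),t_i)$. $\pi$ is strong cyclic for $P$ iff for every $\pi$-trajectory from the initial state to a state $t$ there is a $\pi$-trajectory from $t$ to a goal state. The direct translation $T_D(Q)$ is the FOND problem over $F\cup\{p_{X=0}:X\in V\}$ obtained by reading $X=0$ as $p_{X=0}$ and $X>0$ as $\neg p_{X=0}$ in $I$, $G$ and preconditions, keeping propositional effects, replacing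 each $Inc(X)$ effect by the deterministic effect $\neg p_{X=0}$ and each $Dec(X)$ effect by the nondeterministic effect $\neg p_{X=0}\mid p_{X=0}$. Its states are the boolean states of $Q$, and a policy $\pi$ for $Q$ is identified with the policy $\bar s\mapsto\pi(s)$ on $T_D(Q)$. *)

theory Defs
  imports Complex_Main
begin

(* F = UNIV :: 'f set and V = UNIV :: 'v set, with 'f, 'v finite types *)

datatype ('f, 'v) lit = FLit 'f bool | VZero 'v | VPos 'v
  (* FLit p True = p, FLit p False = \<not>p, VZero X = (X=0), VPos X = (X>0) *)

datatype numeff = Inc | Dec

record ('f, 'v, 'a) qnp =
  qI   :: "('f, 'v) lit set"
  qO   :: "'a set"
  qG   :: "('f, 'v) lit set"
  qPre :: "'a \<Rightarrow> ('f, 'v) lit set"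
  qEff :: "'a \<Rightarrow> ('f \<times> bool) set"
  qN   :: "'a \<Rightarrow> 'v \<Rightarrow> numeff option"   (* at most one numerical effect per variable *)

definition lits_consistent :: "('f, 'v) lit set \<Rightarrow> bool" where
  "lits_consistent L \<longleftrightarrow>
     (\<forall>p. \<not> (FLit p True \<in> L \<and> FLit p False \<in> L)) \<and> (\<forall>X. \<not> (VZero X \<in> L \<and> VPos X \<in> L))"

definition flits_consistent :: "('f \<times> bool) set \<Rightarrow> bool" where
  "flits_consistent E \<longleftrightarrow> (\<forall>p. \<not> ((p, True) \<in> E \<and> (p, False) \<in> E))"

definition qnp_wf :: "('f, 'v, 'a) qnp \<Rightarrow> bool" where
  "qnp_wf Q \<longleftrightarrow> lits_consistent (qI Q) \<and> lits_consistent (qG Q)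
     \<and> (\<forall>a \<in> qO Q. flits_consistent (qEff Q a))
     \<and> (\<forall>a \<in> qO Q. \<forall>X. qN Q a X = Some Dec \<longrightarrow> VPos X \<in> qPre Q a)"

type_synonym ('f, 'v) qstate = "('f \<Rightarrow> bool) \<times> ('v \<Rightarrow> real)"

definition valid_state :: "('f, 'v) qstate \<Rightarrow> bool" where
  "valid_state s \<longleftrightarrow> (\<forall>X. snd s X \<ge> 0)"

fun sat_lit :: "('f, 'v) qstate \<Rightarrow> ('f, 'v) lit \<Rightarrow> bool" where
  "sat_lit s (FLit p b) = (fst s p = b)"
| "sat_lit s (VZero X) = (snd s X = 0)"
| "sat_lit s (VPos X) = (snd s X > 0)"

definition sat_lits :: "('f, 'v) qstate \<Rightarrow> ('f, 'v) lit set \<Rightarrow> bool" where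
  "sat_lits s L \<longleftrightarrow> (\<forall>l \<in> L. sat_lit s l)"

(* initial states: satisfy I under the closed-world assumption *)
definition qnp_initial :: "('f, 'v, 'a) qnp \<Rightarrow> ('f, 'v) qstate \<Rightarrow> bool" where
  "qnp_initial Q s \<longleftrightarrow> valid_state s
     \<and> (\<forall>p. fst s p \<longleftrightarrow> FLit p True \<in> qI Q)
     \<and> (\<forall>X. snd s X = 0 \<longleftrightarrow> VZero X \<in> qI Q)"

definition qnp_goal :: "('f, 'v, 'a) qnp \<Rightarrow> ('f, 'v) qstate \<Rightarrow> bool" where
  "qnp_goal Q s \<longleftrightarrow> sat_lits s (qG Q)"

definition qnp_applicable :: "('f, 'v, 'a) qnp \<Rightarrow> 'a \<Rightarrow> ('f, 'v) qstate \<Rightarrow> bool" where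
  "qnp_applicable Q a s \<longleftrightarrow> a \<in> qO Q \<and> sat_lits s (qPre Q a)"

definition qnp_succ :: "('f, 'v, 'a) qnp \<Rightarrow> 'a \<Rightarrow> ('f, 'v) qstate \<Rightarrow> ('f, 'v) qstate \<Rightarrow> bool" where
  "qnp_succ Q a s s' \<longleftrightarrow> valid_state s'
     \<and> (\<forall>p. fst s' p = (if (p, True) \<in> qEff Q a then True
                        else if (p, False) \<in> qEff Q a then False else fst s p))
     \<and> (\<forall>X. (qN Q a X = Some Inc \<longrightarrow> snd s' X > snd s X)
          \<and> (qN Q a X = Some Dec \<longrightarrow> snd s' X < snd s X)
          \<and> (qN Q a X = None \<longrightarrow> snd s' X = snd s X))"

(* finite epsilon-sequences s_0, a_0, s_1, ..., s_n  (ss = [s_0..s_n], as = [a_0..a_{n-1}]) *)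
definition eps_seq :: "('f, 'v, 'a) qnp \<Rightarrow> real \<Rightarrow> ('f, 'v) qstate list \<Rightarrow> 'a list \<Rightarrow> bool" where
  "eps_seq Q \<epsilon> ss as \<longleftrightarrow> ss \<noteq> [] \<and> length ss = Suc (length as) \<and> valid_state (ss ! 0)
     \<and> (\<forall>i < length as. qnp_applicable Q (as ! i) (ss ! i)
           \<and> qnp_succ Q (as ! i) (ss ! i) (ss ! Suc i)
           \<and> (\<forall>X. snd (ss ! Suc i) X \<noteq> snd (ss ! i) X \<longrightarrow>
                  \<bar>snd (ss ! Suc i) X - snd (ss ! i) X\<bar> \<ge> \<epsilon>
                  \<or> (0 = snd (ss ! Suc i) X \<and> snd (ss ! Suc i) X < snd (ss ! i) X
                      \<and> snd (ss ! i) X < \<epsilon>)))"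

definition qnp_trajectory :: "('f, 'v, 'a) qnp \<Rightarrow> ('f, 'v) qstate list \<Rightarrow> 'a list \<Rightarrow> bool" where
  "qnp_trajectory Q ss as \<longleftrightarrow> (\<exists>\<epsilon> > 0. eps_seq Q \<epsilon> ss as)"

type_synonym ('f, 'v) bstate = "'f + 'v \<Rightarrow> bool"

definition bstate :: "('f, 'v) qstate \<Rightarrow> ('f, 'v) bstate" where
  "bstate s = (\<lambda>x. case x of Inl p \<Rightarrow> fst s p | Inr X \<Rightarrow> snd s X = 0)"

definition qnp_policy :: "('f, 'v, 'a) qnp \<Rightarrow> (('f, 'v) qstate \<Rightarrow> 'a option) \<Rightarrow> bool" where
  "qnp_policy Q \<pi> \<longleftrightarrow> (\<forall>s s'. valid_state s \<and> valid_state s' \<and> bstate s = bstate s' \<longrightarrow> \<pi> s = \<pi> s')"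

definition qnp_pi_trajectory ::
  "('f, 'v, 'a) qnp \<Rightarrow> (('f, 'v) qstate \<Rightarrow> 'a option) \<Rightarrow> ('f, 'v) qstate list \<Rightarrow> bool" where
  "qnp_pi_trajectory Q \<pi> ss \<longleftrightarrow>
     (\<exists>as. qnp_trajectory Q ss as \<and> (\<forall>i < length as. \<pi> (ss ! i) = Some (as ! i)))"

definition qnp_strong_cyclic :: "('f, 'v, 'a) qnp \<Rightarrow> (('f, 'v) qstate \<Rightarrow> 'a option) \<Rightarrow> bool" where
  "qnp_strong_cyclic Q \<pi> \<longleftrightarrow>
     (\<forall>ss. qnp_pi_trajectory Q \<pi> ss \<and> qnp_initial Q (hd ss) \<longrightarrow>
        (\<exists>ss'. qnp_pi_trajectory Q \<pi> ss' \<and> hd ss' = last ss \<and> qnp_goal Q (last ss')))"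

record ('p, 'a) fond =
  fI   :: "('p \<times> bool) set"
  fO   :: "'a set"
  fG   :: "('p \<times> bool) set"
  fPre :: "'a \<Rightarrow> ('p \<times> bool) set"
  fEff :: "'a \<Rightarrow> ('p \<times> bool) set set set"
    (* each element is one (possibly nondeterministic) effect E_1 | ... | E_k,
       given as the set of its outcomes {E_1, ..., E_k}; deterministic effects are singletons *)

definition fsat :: "('p \<Rightarrow> bool) \<Rightarrow> ('p \<times> bool) set \<Rightarrow> bool" where
  "fsat t L \<longleftrightarrow> (\<forall>(p, b) \<in> L. t p = b)"

definition fond_init :: "('p, 'a) fond \<Rightarrow> 'p \<Rightarrow> bool" where
  "fond_init P = (\<lambda>p. (p, True) \<in> fI P)"

definition fond_goal :: "('p, 'a) fond \<Rightarrow> ('p \<Rightarrow> bool) \<Rightarrow> bool" where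
  "fond_goal P t \<longleftrightarrow> fsat t (fG P)"

definition apply_lits :: "('p \<times> bool) set \<Rightarrow> ('p \<Rightarrow> bool) \<Rightarrow> 'p \<Rightarrow> bool" where
  "apply_lits E t = (\<lambda>p. if (p, True) \<in> E then True else if (p, False) \<in> E then False else t p)"

definition fond_succ :: "('p, 'a) fond \<Rightarrow> 'a \<Rightarrow> ('p \<Rightarrow> bool) \<Rightarrow> ('p \<Rightarrow> bool) \<Rightarrow> bool" where
  "fond_succ P a t t' \<longleftrightarrow>
     (\<exists>ch. (\<forall>E \<in> fEff P a. ch E \<in> E) \<and> t' = apply_lits (\<Union> (ch ` fEff P a)) t)"

definition fond_pi_trajectory ::
  "('p, 'a) fond \<Rightarrow> (('p \<Rightarrow> bool) \<Rightarrow> 'a option) \<Rightarrow> ('p \<Rightarrow> bool) list \<Rightarrow> bool" where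
  "fond_pi_trajectory P \<pi> ts \<longleftrightarrow> ts \<noteq> [] \<and>
     (\<forall>i. Suc i < length ts \<longrightarrow> (\<exists>a. \<pi> (ts ! i) = Some a \<and> a \<in> fO P
          \<and> fsat (ts ! i) (fPre P a) \<and> fond_succ P a (ts ! i) (ts ! Suc i)))"

definition fond_strong_cyclic :: "('p, 'a) fond \<Rightarrow> (('p \<Rightarrow> bool) \<Rightarrow> 'a option) \<Rightarrow> bool" where
  "fond_strong_cyclic P \<pi> \<longleftrightarrow>
     (\<forall>ts. fond_pi_trajectory P \<pi> ts \<and> hd ts = fond_init P \<longrightarrow>
        (\<exists>ts'. fond_pi_trajectory P \<pi> ts' \<and> hd ts' = last ts \<and> fond_goal P (last ts')))"

(* Direct translation T_D(Q): variables F \<union> {p_(X=0)} = 'f + 'v        *)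

fun tr_lit :: "('f, 'v) lit \<Rightarrow> ('f + 'v) \<times> bool" where
  "tr_lit (FLit p b) = (Inl p, b)"
| "tr_lit (VZero X) = (Inr X, True)"
| "tr_lit (VPos X) = (Inr X, False)"

definition tr_eff :: "('f, 'v, 'a) qnp \<Rightarrow> 'a \<Rightarrow> (('f + 'v) \<times> bool) set set set" where
  "tr_eff Q a =
     {{(\<lambda>(p, b). (Inl p, b)) ` qEff Q a}}
     \<union> {{{(Inr X, False)}} | X. qN Q a X = Some Inc}
     \<union> {{{(Inr X, False)}, {(Inr X, True)}} | X. qN Q a X = Some Dec}"

definition T_D :: "('f, 'v, 'a) qnp \<Rightarrow> ('f + 'v, 'a) fond" where
  "T_D Q = \<lparr> fI = tr_lit ` qI Q, fO = qO Q, fG = tr_lit ` qG Q,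
             fPre = (\<lambda>a. tr_lit ` qPre Q a), fEff = tr_eff Q \<rparr>"

definition bool_policy ::
  "(('f, 'v) qstate \<Rightarrow> 'a option) \<Rightarrow> (('f, 'v) bstate \<Rightarrow> 'a option)" where
  "bool_policy \<pi> t = \<pi> (SOME s. valid_state s \<and> bstate s = t)"

end

theory Submission
  imports Defs
begin

text \<open>The boolean projection of a QNP transition is a transition of \<open>T_D(Q)\<close>: the two outcomes
of a decrement cover both possibilities for whether the variable reaches 0. Conversely, a
trajectory \<open>t\<^sub>0, \<dots>, t\<^sub>N\<close> of \<open>T_D(Q)\<close> lifts to an \<open>\<epsilon>\<close>-trajectory from any state \<open>s\<close>
with boolean state \<open>t\<^sub>0\<close>: let \<open>m\<close> be the least positive value of \<open>s\<close> (or 1) and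
\<open>\<epsilon> = m / (N + 1)\<close>; increment by \<open>m\<close>, decrement by \<open>\<epsilon>\<close>, or drop to 0 when the next
boolean state says so. Positive values at step \<open>i\<close> stay above \<open>\<epsilon> (N + 1 - i)\<close>, so every
change is by at least \<open>\<epsilon>\<close>. Since the policy, the initial states and the goal only depend on
boolean states, both notions of strong cyclicity quantify over the same boolean trajectories.\<close>

lemma fsat_bstate_tr_lit:
  assumes "valid_state s"
  shows "fsat (bstate s) (tr_lit ` L) \<longleftrightarrow> sat_lits s L"
proof -
  have "fsat (bstate s) {tr_lit l} \<longleftrightarrow> sat_lit s l" for l
    using assms by (cases l) (auto simp: fsat_def bstate_def valid_state_def order_le_less)
  then show ?thesis
    by (auto simp: fsat_def sat_lits_def)
qed

lemma fond_goal_T_D_bstate: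
  "valid_state s \<Longrightarrow> fond_goal (T_D Q) (bstate s) \<longleftrightarrow> qnp_goal Q s"
  by (simp add: fond_goal_def qnp_goal_def T_D_def fsat_bstate_tr_lit)

lemma Inl_in_tr_lit_image: "(Inl p, b) \<in> tr_lit ` L \<longleftrightarrow> FLit p b \<in> L"
proof -
  have "tr_lit l = (Inl p, b) \<longleftrightarrow> l = FLit p b" for l
    by (cases l) auto
  then show ?thesis
    by (metis image_iff)
qed

lemma Inr_True_in_tr_lit_image: "(Inr X, True) \<in> tr_lit ` L \<longleftrightarrow> VZero X \<in> L"
proof -
  have "tr_lit l = (Inr X, True) \<longleftrightarrow> l = VZero X" for l
    by (cases l) auto
  then show ?thesis
    by (metis image_iff)
qed

lemma fond_init_T_D:
  assumes "qnp_initial Q s"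
  shows "fond_init (T_D Q) = bstate s"
proof
  fix x
  show "fond_init (T_D Q) x = bstate s x"
    using assms by (cases x) (simp_all add: fond_init_def T_D_def bstate_def qnp_initial_def
        Inl_in_tr_lit_image Inr_True_in_tr_lit_image)
qed

lemma qnp_initial_exists: "\<exists>s. qnp_initial Q s"
  by (rule exI[of _ "(\<lambda>p. FLit p True \<in> qI Q, \<lambda>X. if VZero X \<in> qI Q then 0 else 1)"])
     (auto simp: qnp_initial_def valid_state_def)

lemma bool_policy_bstate:
  assumes "qnp_policy Q \<pi>" and "valid_state s"
  shows "bool_policy \<pi> (bstate s) = \<pi> s"
proof -
  let ?s = "SOME s'. valid_state s' \<and> bstate s' = bstate s"
  have "valid_state ?s \<and> bstate ?s = bstate s"
    by (rule someI[of _ s]) (use assms in auto)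
  with assms show ?thesis
    unfolding bool_policy_def qnp_policy_def by metis
qed

lemma tr_eff_eq:
  "tr_eff Q a = insert {(\<lambda>(p, b). (Inl p, b)) ` qEff Q a}
     ((\<lambda>X. {{(Inr X, False)}}) ` {X. qN Q a X = Some Inc}
      \<union> (\<lambda>X. {{(Inr X, False)}, {(Inr X, True)}}) ` {X. qN Q a X = Some Dec})"
  by (auto simp: tr_eff_def)

lemma Union_choice_tr_eff:
  assumes "\<forall>E \<in> tr_eff Q a. ch E \<in> E"
  shows "\<Union> (ch ` tr_eff Q a) = (\<lambda>(p, b). (Inl p, b)) ` qEff Q a
     \<union> (\<Union>X \<in> {X. qN Q a X = Some Inc}. {(Inr X, False)})
     \<union> (\<Union>X \<in> {X. qN Q a X = Some Dec}. ch {{(Inr X, False)}, {(Inr X, True)}})"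
proof -
  have "ch {(\<lambda>(p, b). (Inl p, b)) ` qEff Q a} \<in> {(\<lambda>(p, b). (Inl p, b)) ` qEff Q a}"
    using assms by (simp add: tr_eff_eq)
  moreover have "(\<Union>X \<in> {X. qN Q a X = Some Inc}. ch {{(Inr X, False)}})
      = (\<Union>X \<in> {X. qN Q a X = Some Inc}. {(Inr X, False)})"
  proof (rule SUP_cong)
    show "ch {{(Inr X, False)}} = {(Inr X, False)}" if "X \<in> {X. qN Q a X = Some Inc}" for X
      using bspec[OF assms, of "{{(Inr X, False)}}"] that by (simp add: tr_eff_eq)
  qed simp
  ultimately show ?thesis
    unfolding tr_eff_eq image_insert image_Un Union_insert Union_Un_distrib image_image
    by (simp add: Un_assoc)
qed

lemma mem_Union_choice_tr_eff:
  assumes ch: "\<forall>E \<in> tr_eff Q a. ch E \<in> E"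
  shows "(Inl p, b) \<in> \<Union> (ch ` tr_eff Q a) \<longleftrightarrow> (p, b) \<in> qEff Q a"
    and "qN Q a X = Some Inc \<Longrightarrow> (Inr X, b) \<in> \<Union> (ch ` tr_eff Q a) \<longleftrightarrow> \<not> b"
    and "qN Q a X = Some Dec \<Longrightarrow>
      (Inr X, b) \<in> \<Union> (ch ` tr_eff Q a) \<longleftrightarrow> (Inr X, b) \<in> ch {{(Inr X, False)}, {(Inr X, True)}}"
    and "qN Q a X = None \<Longrightarrow> (Inr X, b) \<notin> \<Union> (ch ` tr_eff Q a)"
proof -
  have dec: "z = (Inr Y, False) \<or> z = (Inr Y, True)"
    if "z \<in> ch {{(Inr Y, False)}, {(Inr Y, True)}}" and "qN Q a Y = Some Dec" for Y z
    using bspec[OF ch, of "{{(Inr Y, False)}, {(Inr Y, True)}}"] that by (auto simp: tr_eff_eq)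
  note U = Union_choice_tr_eff[OF ch]
  show "(Inl p, b) \<in> \<Union> (ch ` tr_eff Q a) \<longleftrightarrow> (p, b) \<in> qEff Q a"
    unfolding U by (auto dest: dec)
  show "qN Q a X = Some Inc \<Longrightarrow> (Inr X, b) \<in> \<Union> (ch ` tr_eff Q a) \<longleftrightarrow> \<not> b"
    unfolding U by (auto dest: dec)
  show "qN Q a X = Some Dec \<Longrightarrow>
      (Inr X, b) \<in> \<Union> (ch ` tr_eff Q a) \<longleftrightarrow> (Inr X, b) \<in> ch {{(Inr X, False)}, {(Inr X, True)}}"
    unfolding U by (auto dest: dec)
  show "qN Q a X = None \<Longrightarrow> (Inr X, b) \<notin> \<Union> (ch ` tr_eff Q a)"
    unfolding U by (auto dest: dec)
qed

lemma fond_succ_T_D_iff: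
  fixes Q :: "('f, 'v, 'a) qnp"
  shows "fond_succ (T_D Q) a t t' \<longleftrightarrow>
     t' \<circ> Inl = apply_lits (qEff Q a) (t \<circ> Inl)
     \<and> (\<forall>X. qN Q a X = Some Inc \<longrightarrow> \<not> t' (Inr X))
     \<and> (\<forall>X. qN Q a X = None \<longrightarrow> t' (Inr X) = t (Inr X))"
  (is "_ \<longleftrightarrow> ?rhs")
proof
  assume "fond_succ (T_D Q) a t t'"
  then obtain ch where ch: "\<forall>E \<in> tr_eff Q a. ch E \<in> E"
    and t': "t' = apply_lits (\<Union> (ch ` tr_eff Q a)) t"
    by (auto simp: fond_succ_def T_D_def)
  define U where "U = \<Union> (ch ` tr_eff Q a)"
  note mem_U = mem_Union_choice_tr_eff[OF ch, folded U_def]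
  show ?rhs
    unfolding t' U_def[symmetric] by (simp add: apply_lits_def fun_eq_iff mem_U)
next
  assume rhs: ?rhs
  define ch where "ch E = (if is_singleton E then the_elem E else {(x, b) \<in> \<Union> E. t' x = b})"
    for E :: "(('f + 'v) \<times> bool) set set"
  have ch_dec: "ch {{(Inr X, False)}, {(Inr X, True)}} = {(Inr X, t' (Inr X))}" for X
    by (auto simp: ch_def is_singleton_def doubleton_eq_iff)
  have ch_singleton: "ch {e} = e" for e
    by (simp add: ch_def)
  have ch: "\<forall>E \<in> tr_eff Q a. ch E \<in> E"
    by (auto simp: tr_eff_eq ch_dec ch_singleton)
  define U where "U = \<Union> (ch ` tr_eff Q a)"
  note mem_U = mem_Union_choice_tr_eff[OF ch, folded U_def]
  have "apply_lits U t x = t' x" for x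
  proof (cases x)
    case (Inl p)
    with rhs show ?thesis
      by (simp add: apply_lits_def fun_eq_iff mem_U)
  next
    case (Inr X)
    consider "qN Q a X = None" | "qN Q a X = Some Inc" | "qN Q a X = Some Dec"
      by (metis numeff.exhaust option.exhaust)
    then show ?thesis
    proof cases
      case 1
      with rhs show ?thesis by (simp add: Inr apply_lits_def mem_U)
    next
      case 2
      with rhs show ?thesis by (simp add: Inr apply_lits_def mem_U)
    next
      case 3
      then show ?thesis by (simp add: Inr apply_lits_def mem_U ch_dec)
    qed
  qed
  with ch show "fond_succ (T_D Q) a t t'"
    by (auto simp: fond_succ_def T_D_def U_def)
qed

lemma fond_succ_T_D_bstate:
  assumes "valid_state s" and "qnp_succ Q a s s'"
  shows "fond_succ (T_D Q) a (bstate s) (bstate s')"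
proof -
  have "snd s' X \<noteq> 0" if "qN Q a X = Some Inc" for X
  proof -
    have "0 \<le> snd s X" and "snd s X < snd s' X"
      using assms that by (simp_all add: valid_state_def qnp_succ_def)
    then show ?thesis by simp
  qed
  with assms(2) show ?thesis
    by (auto simp: fond_succ_T_D_iff qnp_succ_def bstate_def apply_lits_def fun_eq_iff)
qed

lemma eps_seq_valid:
  assumes "eps_seq Q \<epsilon> ss as" and "i < length ss"
  shows "valid_state (ss ! i)"
  using assms(2)
proof (induction i)
  case 0
  with assms(1) show ?case by (simp add: eps_seq_def)
next
  case (Suc i)
  with assms(1) show ?case by (auto simp: eps_seq_def qnp_succ_def)
qed

lemma qnp_pi_trajectory_nonempty: "qnp_pi_trajectory Q \<pi> ss \<Longrightarrow> ss \<noteq> []"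
  by (auto simp: qnp_pi_trajectory_def qnp_trajectory_def eps_seq_def)

lemma fond_pi_trajectory_map_bstate:
  assumes pol: "qnp_policy Q \<pi>" and traj: "qnp_pi_trajectory Q \<pi> ss"
  shows "fond_pi_trajectory (T_D Q) (bool_policy \<pi>) (map bstate ss)"
proof -
  obtain as \<epsilon> where eps: "eps_seq Q \<epsilon> ss as" and acts: "\<forall>i < length as. \<pi> (ss ! i) = Some (as ! i)"
    using traj unfolding qnp_pi_trajectory_def qnp_trajectory_def by blast
  have len: "length ss = Suc (length as)"
    using eps by (simp add: eps_seq_def)
  have "bool_policy \<pi> (bstate (ss ! i)) = Some (as ! i) \<and> as ! i \<in> fO (T_D Q)
      \<and> fsat (bstate (ss ! i)) (fPre (T_D Q) (as ! i))
      \<and> fond_succ (T_D Q) (as ! i) (bstate (ss ! i)) (bstate (ss ! Suc i))"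
    if i: "i < length as" for i
  proof -
    have valid: "valid_state (ss ! i)"
      using eps_seq_valid[OF eps] i len by simp
    have "qnp_applicable Q (as ! i) (ss ! i)" and "qnp_succ Q (as ! i) (ss ! i) (ss ! Suc i)"
      using eps i by (auto simp: eps_seq_def)
    then show ?thesis
      using acts i bool_policy_bstate[OF pol valid] fond_succ_T_D_bstate[OF valid]
      by (simp add: T_D_def fsat_bstate_tr_lit[OF valid] qnp_applicable_def)
  qed
  with len show ?thesis
    by (auto simp: fond_pi_trajectory_def)
qed

lemma valid_state_last:
  assumes "qnp_pi_trajectory Q \<pi> ss"
  shows "valid_state (last ss)"
proof -
  obtain as \<epsilon> where "eps_seq Q \<epsilon> ss as"
    using assms by (auto simp: qnp_pi_trajectory_def qnp_trajectory_def)
  with qnp_pi_trajectory_nonempty[OF assms] show ?thesis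
    by (simp add: last_conv_nth eps_seq_valid)
qed

definition eps_num_step ::
  "real \<Rightarrow> ('v \<Rightarrow> numeff option) \<Rightarrow> ('v \<Rightarrow> real) \<Rightarrow> ('v \<Rightarrow> real) \<Rightarrow> bool" where
  "eps_num_step \<epsilon> eff x x' \<longleftrightarrow> (\<forall>X.
     (eff X = Some Inc \<longrightarrow> x X < x' X) \<and> (eff X = Some Dec \<longrightarrow> x' X < x X)
     \<and> (eff X = None \<longrightarrow> x' X = x X)
     \<and> (x' X \<noteq> x X \<longrightarrow> \<bar>x' X - x X\<bar> \<ge> \<epsilon> \<or> (0 = x' X \<and> x' X < x X \<and> x X < \<epsilon>)))"

lemma eps_num_steps_exist:
  fixes z :: "nat \<Rightarrow> 'v::finite \<Rightarrow> bool" and eff :: "nat \<Rightarrow> 'v \<Rightarrow> numeff option"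
  assumes init_nonneg: "\<And>X. 0 \<le> init X" and init_zero: "\<And>X. init X = 0 \<longleftrightarrow> z 0 X"
    and none: "\<And>i X. i < N \<Longrightarrow> eff i X = None \<Longrightarrow> z (Suc i) X = z i X"
    and inc: "\<And>i X. i < N \<Longrightarrow> eff i X = Some Inc \<Longrightarrow> \<not> z (Suc i) X"
    and dec: "\<And>i X. i < N \<Longrightarrow> eff i X = Some Dec \<Longrightarrow> \<not> z i X"
  obtains \<epsilon> x where "\<epsilon> > 0" and "x 0 = init"
    and "\<And>i X. i \<le> N \<Longrightarrow> 0 \<le> x i X \<and> (x i X = 0 \<longleftrightarrow> z i X)"
    and "\<And>i. i < N \<Longrightarrow> eps_num_step \<epsilon> (eff i) (x i) (x (Suc i))"
proof -
  define m where "m = Min (insert 1 (init ` {X. 0 < init X}))"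
  have m_pos: "0 < m"
    unfolding m_def by (subst Min_gr_iff) auto
  have m_le: "m \<le> init X" if "\<not> z 0 X" for X
    using that init_nonneg init_zero unfolding m_def by (intro Min_le) (auto simp: order_le_less)
  define \<epsilon> where "\<epsilon> = m / (real N + 1)"
  have \<epsilon>_pos: "0 < \<epsilon>" and m_eq: "m = \<epsilon> * (real N + 1)"
    using m_pos by (simp_all add: \<epsilon>_def)
  define x where "x = rec_nat init (\<lambda>i xi X. if z (Suc i) X then 0 else
      (case eff i X of Some Inc \<Rightarrow> xi X + m | Some Dec \<Rightarrow> xi X - \<epsilon> | None \<Rightarrow> xi X))"
  have x_0: "x 0 = init" and x_Suc: "x (Suc i) X = (if z (Suc i) X then 0 else
      (case eff i X of Some Inc \<Rightarrow> x i X + m | Some Dec \<Rightarrow> x i X - \<epsilon> | None \<Rightarrow> x i X))" for i X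
    unfolding x_def by simp_all
  have inv: "(z i X \<longrightarrow> x i X = 0) \<and> (\<not> z i X \<longrightarrow> \<epsilon> * (real N + 1 - real i) \<le> x i X)"
    if "i \<le> N" for i X
    using that
  proof (induction i)
    case 0
    then show ?case
      using init_zero m_le m_eq by (auto simp: x_0)
  next
    case (Suc i)
    have "0 \<le> \<epsilon> * (real N + 1 - real i)"
      using Suc.prems \<epsilon>_pos by simp
    then have "0 \<le> x i X"
      using Suc by (cases "z i X") auto
    moreover have "\<epsilon> * (real N + 1 - real (Suc i)) \<le> \<epsilon> * (real N + 1 - real i) - \<epsilon>"
      by (simp add: algebra_simps)
    moreover have "\<epsilon> * (real N + 1 - real (Suc i)) \<le> m"
      using \<epsilon>_pos m_eq by (simp add: mult_left_mono)
    ultimately show ?case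
      using Suc none[of i X] dec[of i X] \<epsilon>_pos
      by (cases "eff i X") (auto simp: x_Suc split: numeff.split)
  qed
  have x_ge: "\<epsilon> \<le> x i X" if "i \<le> N" and "\<not> z i X" for i X
  proof -
    have "\<epsilon> \<le> \<epsilon> * (real N + 1 - real i)"
      using that \<epsilon>_pos by simp
    with inv[OF \<open>i \<le> N\<close>, of X] that show ?thesis
      by auto
  qed
  have valuation: "0 \<le> x i X \<and> (x i X = 0 \<longleftrightarrow> z i X)" if "i \<le> N" for i X
    using inv[OF that, of X] x_ge[OF that, of X] \<epsilon>_pos by (cases "z i X") auto
  have "\<epsilon> \<le> m"
    using m_eq \<epsilon>_pos by simp
  then have "eps_num_step \<epsilon> (eff i) (x i) (x (Suc i))" if "i < N" for i
    unfolding eps_num_step_def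
    apply (intro allI)
    subgoal for X
      using that inv[of i X] inv[of "Suc i" X] x_ge[of i X] none[of i X] inc[of i X] dec[of i X] \<epsilon>_pos
      by (cases "eff i X") (auto simp: x_Suc split: numeff.split)
    done
  with \<epsilon>_pos x_0 valuation that show ?thesis
    by blast
qed

lemma eps_seq_iff:
  "eps_seq Q \<epsilon> ss as \<longleftrightarrow> ss \<noteq> [] \<and> length ss = Suc (length as) \<and> valid_state (ss ! 0)
     \<and> (\<forall>i < length as. qnp_applicable Q (as ! i) (ss ! i) \<and> valid_state (ss ! Suc i)
          \<and> fst (ss ! Suc i) = apply_lits (qEff Q (as ! i)) (fst (ss ! i))
          \<and> eps_num_step \<epsilon> (qN Q (as ! i)) (snd (ss ! i)) (snd (ss ! Suc i)))"
  unfolding eps_seq_def qnp_succ_def eps_num_step_def apply_lits_def fun_eq_iff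
  by blast

lemma qnp_pi_trajectory_lift:
  fixes Q :: "('f, 'v::finite, 'a) qnp"
  assumes wf: "qnp_wf Q" and pol: "qnp_policy Q \<pi>" and valid: "valid_state s"
    and traj: "fond_pi_trajectory (T_D Q) (bool_policy \<pi>) ts" and hd: "hd ts = bstate s"
  shows "\<exists>ss. qnp_pi_trajectory Q \<pi> ss \<and> hd ss = s \<and> map bstate ss = ts"
proof -
  define N where "N = length ts - 1"
  have len: "length ts = Suc N"
    using traj by (simp add: N_def fond_pi_trajectory_def)
  define act where "act i = the (bool_policy \<pi> (ts ! i))" for i
  have step: "bool_policy \<pi> (ts ! i) = Some (act i) \<and> act i \<in> qO Q
      \<and> fsat (ts ! i) (tr_lit ` qPre Q (act i)) \<and> fond_succ (T_D Q) (act i) (ts ! i) (ts ! Suc i)"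
    if "i < N" for i
    using traj that len unfolding fond_pi_trajectory_def act_def by (fastforce simp: T_D_def)
  have dec: "\<not> (ts ! i) (Inr X)" if "i < N" and "qN Q (act i) X = Some Dec" for i X
  proof -
    have "VPos X \<in> qPre Q (act i)"
      using wf step[OF \<open>i < N\<close>] that(2) by (auto simp: qnp_wf_def)
    then have "(Inr X, False) \<in> tr_lit ` qPre Q (act i)"
      by force
    then show ?thesis
      using step[OF \<open>i < N\<close>] by (auto simp: fsat_def)
  qed
  have ts_0: "ts ! 0 = bstate s"
    using hd len by (cases ts) auto
  obtain \<epsilon> x where "\<epsilon> > 0" and x_0: "x 0 = snd s"
    and x_valuation: "\<And>i X. i \<le> N \<Longrightarrow> 0 \<le> x i X \<and> (x i X = 0 \<longleftrightarrow> (ts ! i) (Inr X))"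
    and x_step: "\<And>i. i < N \<Longrightarrow> eps_num_step \<epsilon> (qN Q (act i)) (x i) (x (Suc i))"
  proof (rule eps_num_steps_exist[where N = N and init = "snd s" and z = "\<lambda>i X. (ts ! i) (Inr X)"
        and eff = "\<lambda>i. qN Q (act i)"])
    show "0 \<le> snd s X" and "snd s X = 0 \<longleftrightarrow> (ts ! 0) (Inr X)" for X
      using valid by (simp_all add: valid_state_def ts_0 bstate_def)
  qed (use step dec in \<open>auto simp: fond_succ_T_D_iff\<close>)
  define ss where "ss = map (\<lambda>i. (\<lambda>p. (ts ! i) (Inl p), x i)) [0..<Suc N]"
  define as where "as = map act [0..<N]"
  have ss_nth: "ss ! i = (\<lambda>p. (ts ! i) (Inl p), x i)" if "i \<le> N" for i
    using that by (simp add: ss_def nth_append del: upt_Suc)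
  have bstate_ss: "bstate (ss ! i) = ts ! i" if "i \<le> N" for i
  proof
    fix y
    show "bstate (ss ! i) y = (ts ! i) y"
      using x_valuation[OF that] by (cases y) (simp_all add: ss_nth[OF that] bstate_def)
  qed
  have valid_ss: "valid_state (ss ! i)" if "i \<le> N" for i
    using x_valuation[OF that] by (simp add: ss_nth[OF that] valid_state_def)
  have len_ss: "length ss = Suc N"
    by (simp add: ss_def)
  have map_ss: "map bstate ss = ts"
    by (rule nth_equalityI) (simp_all add: len len_ss bstate_ss less_Suc_eq_le)
  have hd_ss: "hd ss = s"
    using ss_nth[of 0] x_0 ts_0 by (cases s) (simp add: ss_def hd_map bstate_def del: upt_Suc)
  have eps: "eps_seq Q \<epsilon> ss as"
    unfolding eps_seq_iff
  proof (intro conjI allI impI)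
    show "ss \<noteq> []" and "length ss = Suc (length as)" and "valid_state (ss ! 0)"
      using len_ss valid_ss[of 0] by (auto simp: as_def)
    fix i
    assume "i < length as"
    then have i: "i < N" and as_i: "as ! i = act i"
      by (simp_all add: as_def)
    have valid_i: "valid_state (ss ! i)"
      using valid_ss i by simp
    show "qnp_applicable Q (as ! i) (ss ! i)"
      using step[OF i] bstate_ss[of i] i fsat_bstate_tr_lit[OF valid_i]
      by (simp add: as_i qnp_applicable_def)
    show "valid_state (ss ! Suc i)"
      using valid_ss i by simp
    show "fst (ss ! Suc i) = apply_lits (qEff Q (as ! i)) (fst (ss ! i))"
      using step[OF i] i by (simp add: as_i ss_nth fond_succ_T_D_iff comp_def)
    show "eps_num_step \<epsilon> (qN Q (as ! i)) (snd (ss ! i)) (snd (ss ! Suc i))"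
      using x_step[OF i] i by (simp add: as_i ss_nth)
  qed
  have "\<forall>i < length as. \<pi> (ss ! i) = Some (as ! i)"
    using bool_policy_bstate[OF pol valid_ss] bstate_ss step by (simp add: as_def)
  with eps \<open>\<epsilon> > 0\<close> have "qnp_pi_trajectory Q \<pi> ss"
    unfolding qnp_pi_trajectory_def qnp_trajectory_def by blast
  with hd_ss map_ss show ?thesis
    by blast
qed

lemma goal_reachable_T_D_iff:
  fixes Q :: "('f, 'v::finite, 'a) qnp"
  assumes wf: "qnp_wf Q" and pol: "qnp_policy Q \<pi>" and valid: "valid_state s"
  shows "(\<exists>ss. qnp_pi_trajectory Q \<pi> ss \<and> hd ss = s \<and> qnp_goal Q (last ss)) \<longleftrightarrow>
    (\<exists>ts. fond_pi_trajectory (T_D Q) (bool_policy \<pi>) ts \<and> hd ts = bstate s \<and> fond_goal (T_D Q) (last ts))"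
proof
  assume "\<exists>ss. qnp_pi_trajectory Q \<pi> ss \<and> hd ss = s \<and> qnp_goal Q (last ss)"
  then obtain ss where ss: "qnp_pi_trajectory Q \<pi> ss" "hd ss = s" "qnp_goal Q (last ss)"
    by blast
  then show "\<exists>ts. fond_pi_trajectory (T_D Q) (bool_policy \<pi>) ts \<and> hd ts = bstate s \<and> fond_goal (T_D Q) (last ts)"
    using fond_pi_trajectory_map_bstate[OF pol] qnp_pi_trajectory_nonempty[OF ss(1)]
      fond_goal_T_D_bstate[OF valid_state_last[OF ss(1)]]
    by (metis hd_map last_map)
next
  assume "\<exists>ts. fond_pi_trajectory (T_D Q) (bool_policy \<pi>) ts \<and> hd ts = bstate s \<and> fond_goal (T_D Q) (last ts)"
  then obtain ts ss where "qnp_pi_trajectory Q \<pi> ss" "hd ss = s" "map bstate ss = ts" "fond_goal (T_D Q) (last ts)"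
    using qnp_pi_trajectory_lift[OF wf pol valid] by blast
  then show "\<exists>ss. qnp_pi_trajectory Q \<pi> ss \<and> hd ss = s \<and> qnp_goal Q (last ss)"
    using qnp_pi_trajectory_nonempty fond_goal_T_D_bstate valid_state_last by (metis last_map)
qed

lemma reachable_T_D_iff:
  fixes Q :: "('f, 'v::finite, 'a) qnp"
  assumes wf: "qnp_wf Q" and pol: "qnp_policy Q \<pi>"
  shows "(\<exists>ts. fond_pi_trajectory (T_D Q) (bool_policy \<pi>) ts \<and> hd ts = fond_init (T_D Q) \<and> last ts = t) \<longleftrightarrow>
    (\<exists>ss. qnp_pi_trajectory Q \<pi> ss \<and> qnp_initial Q (hd ss) \<and> bstate (last ss) = t)"
proof
  obtain s0 where s0: "qnp_initial Q s0"
    using qnp_initial_exists by blast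
  then have "valid_state s0"
    by (simp add: qnp_initial_def)
  assume "\<exists>ts. fond_pi_trajectory (T_D Q) (bool_policy \<pi>) ts \<and> hd ts = fond_init (T_D Q) \<and> last ts = t"
  then show "\<exists>ss. qnp_pi_trajectory Q \<pi> ss \<and> qnp_initial Q (hd ss) \<and> bstate (last ss) = t"
    using qnp_pi_trajectory_lift[OF wf pol \<open>valid_state s0\<close>] fond_init_T_D[OF s0] s0 qnp_pi_trajectory_nonempty
    by (metis last_map)
next
  assume "\<exists>ss. qnp_pi_trajectory Q \<pi> ss \<and> qnp_initial Q (hd ss) \<and> bstate (last ss) = t"
  then show "\<exists>ts. fond_pi_trajectory (T_D Q) (bool_policy \<pi>) ts \<and> hd ts = fond_init (T_D Q) \<and> last ts = t"
    using fond_pi_trajectory_map_bstate[OF pol] fond_init_T_D qnp_pi_trajectory_nonempty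
    by (metis hd_map last_map)
qed

theorem theorem1:
  fixes Q :: "('f::finite, 'v::finite, 'a) qnp"
    and \<pi> :: "('f, 'v) qstate \<Rightarrow> 'a option"
  assumes "qnp_wf Q"
    and "qnp_policy Q \<pi>"
  shows "qnp_strong_cyclic Q \<pi> \<longleftrightarrow> fond_strong_cyclic (T_D Q) (bool_policy \<pi>)"
proof -
  let ?goal_reachable = "\<lambda>t. \<exists>ts. fond_pi_trajectory (T_D Q) (bool_policy \<pi>) ts \<and> hd ts = t
    \<and> fond_goal (T_D Q) (last ts)"
  have "qnp_strong_cyclic Q \<pi> \<longleftrightarrow>
      (\<forall>ss. qnp_pi_trajectory Q \<pi> ss \<and> qnp_initial Q (hd ss) \<longrightarrow> ?goal_reachable (bstate (last ss)))"
    unfolding qnp_strong_cyclic_def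
    using goal_reachable_T_D_iff[OF assms valid_state_last] by blast
  also have "\<dots> \<longleftrightarrow> (\<forall>t. (\<exists>ss. qnp_pi_trajectory Q \<pi> ss \<and> qnp_initial Q (hd ss) \<and> bstate (last ss) = t)
      \<longrightarrow> ?goal_reachable t)"
    by blast
  also have "\<dots> \<longleftrightarrow> fond_strong_cyclic (T_D Q) (bool_policy \<pi>)"
    unfolding fond_strong_cyclic_def reachable_T_D_iff[OF assms, symmetric] by blast
  finally show ?thesis .
qed

end
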